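(* Let $n\ge2$, let $u_0$ be a polar $n$-complex number, and let $\Gamma$ be a closed piecewise smooth loop along which $u-u_0$ is invertible. For $k=1,\dots,\lfloor(n-1)/2\rfloor$ let $\Gamma_k$ be the projection of $\Gamma$ onto the plane of coordinates $(v_k,\tilde v_k)$ and $u_{0,k}=(v_k(u_0),\tilde v_k(u_0))$ the projection of $u_0$; assume each $\Gamma_k$ is a simple closed curve traversed counterclockwise, not passing through $u_{0,k}$, and set $\mathrm{int}_k=1$ if $u_{0,k}$ lies inside $\Gamma_k$ and $\mathrm{int}_k=0$ if it lies outside. Then $$\oint_\Gamma\frac{du}{u-u_0}=2\pi\sum_{k=1}^{\lfloor(n-1)/2\rfloor}\tilde e_k\,\mathrm{int}_k.$$ Moreover, if $f(u)=\sum_{j=0}^\infty c_j(u-u_0)^j$ with polar $n$-complex $c_j$ converges absolutely on an open set containing $\Gamma$ and a surface spanning $\Gamma$, then $$\oint_\Gamma\frac{f(u)\,du}{u-u_0}=2\pi f(u_0)\sum_{k=1}^{\lfloor(n-1)/2\rfloor}\tilde e_k\,\mathrm{int}_k.$$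
   Context: Polar $n$-complex numbers: $u=x_0+h_1x_1+\cdots+h_{n-1}x_{n-1}$, $x_j\in\mathbb{R}$, $h_0=1$, componentwise addition, bilinear multiplication $h_jh_k=h_{(j+k)\bmod n}$. For $u$: $v_k=\sum_px_p\cos(2\pi kp/n)$, $\tilde v_k=\sum_px_p\sin(2\pi kp/n)$; $\tilde e_k=\frac2n\sum_{p=0}^{n-1}\sin(2\pi kp/n)h_p$. For $F(u)=\sum_kh_kP_k$ and $du=\sum_kh_kdx_k$, $\oint_\Gamma F(u)\,du=\sum_{k=0}^{n-1}h_k\oint_\Gamma\sum_{l=0}^{n-1}P_l\,dx_{(k-l)\bmod n}$; $1/(u-u_0)$ denotes the multiplicative inverse in the algebra. *)

theory Defs
  imports "HOL-Complex_Analysis.Complex_Analysis"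
begin

text \<open>Polar n-complex numbers are represented as functions nat => real;
  only the components 0..n-1 are meaningful (x_j is the coefficient of h_j).
  All algebra operations below return 0 in components >= n.\<close>

definition pc_mult :: "nat \<Rightarrow> (nat \<Rightarrow> real) \<Rightarrow> (nat \<Rightarrow> real) \<Rightarrow> (nat \<Rightarrow> real)" where
  "pc_mult n a b = (\<lambda>m. if m < n then
      (\<Sum>j<n. \<Sum>k<n. if (j + k) mod n = m then a j * b k else 0) else 0)"

definition pc_one :: "nat \<Rightarrow> (nat \<Rightarrow> real)" where
  "pc_one n = (\<lambda>m. if m = 0 \<and> 0 < n then 1 else 0)"

primrec pc_pow :: "nat \<Rightarrow> (nat \<Rightarrow> real) \<Rightarrow> nat \<Rightarrow> (nat \<Rightarrow> real)" where
  "pc_pow n u 0 = pc_one n"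
| "pc_pow n u (Suc j) = pc_mult n (pc_pow n u j) u"

definition pc_invertible :: "nat \<Rightarrow> (nat \<Rightarrow> real) \<Rightarrow> bool" where
  "pc_invertible n u = (\<exists>w. pc_mult n u w = pc_one n)"

text \<open>The multiplicative inverse (meaningful when u is invertible).\<close>
definition pc_inverse :: "nat \<Rightarrow> (nat \<Rightarrow> real) \<Rightarrow> (nat \<Rightarrow> real)" where
  "pc_inverse n u = (SOME w. pc_mult n u w = pc_one n \<and> (\<forall>i\<ge>n. w i = 0))"

definition pc_v :: "nat \<Rightarrow> nat \<Rightarrow> (nat \<Rightarrow> real) \<Rightarrow> real" where
  "pc_v n k u = (\<Sum>p<n. u p * cos (2 * pi * real k * real p / real n))"

definition pc_vt :: "nat \<Rightarrow> nat \<Rightarrow> (nat \<Rightarrow> real) \<Rightarrow> real" where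
  "pc_vt n k u = (\<Sum>p<n. u p * sin (2 * pi * real k * real p / real n))"

definition pc_et :: "nat \<Rightarrow> nat \<Rightarrow> (nat \<Rightarrow> real)" where
  "pc_et n k = (\<lambda>p. if p < n then 2 / real n * sin (2 * pi * real k * real p / real n) else 0)"

text \<open>A loop Gamma in n-complex space is given by its coordinate functions
  gam j :: real => real (j < n), parametrised over [0,1]; its point at time t
  is (\<lambda>j. gam j t).\<close>
definition pc_proj_path :: "nat \<Rightarrow> nat \<Rightarrow> (nat \<Rightarrow> real \<Rightarrow> real) \<Rightarrow> real \<Rightarrow> complex" where
  "pc_proj_path n k gam = (\<lambda>t. Complex (pc_v n k (\<lambda>j. gam j t)) (pc_vt n k (\<lambda>j. gam j t)))"

definition pc_proj_point :: "nat \<Rightarrow> nat \<Rightarrow> (nat \<Rightarrow> real) \<Rightarrow> complex" where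
  "pc_proj_point n k u = Complex (pc_v n k u) (pc_vt n k u)"

definition pc_line_integral :: "nat \<Rightarrow> ((nat \<Rightarrow> real) \<Rightarrow> (nat \<Rightarrow> real)) \<Rightarrow> (nat \<Rightarrow> real \<Rightarrow> real) \<Rightarrow> (nat \<Rightarrow> real)" where
  "pc_line_integral n F gam = (\<lambda>k. if k < n then
      integral {0..1} (\<lambda>t. \<Sum>l<n. F (\<lambda>j. gam j t) l *
                          vector_derivative (gam ((k + n - l) mod n)) (at t))
    else 0)"

definition pc_open :: "nat \<Rightarrow> (nat \<Rightarrow> real) set \<Rightarrow> bool" where
  "pc_open n S = (\<forall>u\<in>S. \<exists>e>0. \<forall>w. (\<forall>m<n. \<bar>w m - u m\<bar> < e) \<longrightarrow> w \<in> S)"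

end

theory Submission
  imports Defs
begin

(* The discrete Fourier transform u \<mapsto> (\<Sum>p<n. u p * \<omega>^(k p))_(k<n), \<omega> = exp (2 \<pi> i / n),
   embeds the polar n-complex algebra into C^n with the componentwise product, and its
   k-th component is the point v_k(u) + i tilde v_k(u) of the k-th projection plane.  Transforming
   the line integral componentwise turns it into the complex contour integrals of the transformed
   integrands along the projected loops.  For 1/(u - u0) these are 2 \<pi> i times winding numbers:
   for k = 0 and 2k = n the projected loop lies on the real line and winds zero times, for
   1 <= k < n/2 the winding number is int_k, and for n/2 < k < n the transformed integral is the
   conjugate of the one for n - k.  Since tilde e_k transforms to i at k and to -i at n - k, inverting the transform
   gives 2 \<pi> \<Sum> tilde e_k int_k.  For f(u)/(u - u0) each transformed f is a complex power
   series converging on a disc around the projection of u0 that contains the projected loop, so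
   Cauchy's integral formula multiplies the previous values by the transform of f(u0). *)

section \<open>Roots of unity\<close>

definition unit_root :: "nat \<Rightarrow> complex" where
  "unit_root n = cis (2 * pi / real n)"

lemma unit_root_pow: "unit_root n ^ m = cis (2 * pi * real m / real n)"
  unfolding unit_root_def by (subst Complex.DeMoivre) (simp add: mult_ac)

lemma norm_unit_root_pow: "norm (unit_root n ^ m) = 1"
  by (simp add: unit_root_pow)

lemma unit_root_pow_eq_1_iff:
  assumes "n > 0" shows "unit_root n ^ m = 1 \<longleftrightarrow> n dvd m"
proof -
  have "unit_root n ^ m = exp (2 * of_real pi * \<i> * of_nat m / of_nat n)"
    by (simp add: unit_root_pow cis_conv_exp mult_ac)
  also have "\<dots> = 1 \<longleftrightarrow> n dvd m"
    using assms by (intro complex_root_unity_eq_1) simp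
  finally show ?thesis .
qed

lemma unit_root_pow_mod:
  assumes "n > 0" shows "unit_root n ^ (m mod n) = unit_root n ^ m"
proof -
  have "unit_root n ^ m = unit_root n ^ (n * (m div n) + m mod n)"
    by (simp only: mult_div_mod_eq)
  also have "\<dots> = (unit_root n ^ n) ^ (m div n) * unit_root n ^ (m mod n)"
    by (simp only: power_add power_mult)
  also have "unit_root n ^ n = 1"
    using unit_root_pow_eq_1_iff[OF assms] by simp
  finally show ?thesis
    by simp
qed

lemma unit_root_pow_reflect:
  assumes "k \<le> n" shows "unit_root n ^ ((n - k) * p) = cnj (unit_root n ^ (k * p))"
proof (cases "n = 0")
  case False
  have "2 * pi * real ((n - k) * p) / real n = - (2 * pi * real (k * p) / real n) + 2 * pi * real p"
    using assms False by (simp add: of_nat_diff field_simps)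
  then have "unit_root n ^ ((n - k) * p) = cis (- (2 * pi * real (k * p) / real n)) * cis (2 * pi * real p)"
    by (simp only: unit_root_pow cis_mult)
  also have "cis (2 * pi * real p) = 1"
    by simp
  finally show ?thesis
    by (simp only: unit_root_pow cis_cnj mult_1_right)
qed (use assms in simp)

lemma dvd_less_double_iff: "0 < d \<Longrightarrow> d < 2 * n \<Longrightarrow> n dvd d \<longleftrightarrow> d = (n::nat)"
proof
  assume "0 < d" "d < 2 * n" "n dvd d"
  then obtain q where "d = n * q" by blast
  with \<open>0 < d\<close> \<open>d < 2 * n\<close> show "d = n"
    by (metis One_nat_def less_2_cases_iff mult_0_right mult_less_cancel1 nat_neq_iff mult.commute mult_1_right)
qed simp

lemma sum_unit_root_pow:
  assumes "n > 0"
  shows "(\<Sum>p<n. unit_root n ^ (a * p)) = (if n dvd a then of_nat n else 0)"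
proof (cases "n dvd a")
  case True
  then have "unit_root n ^ (a * p) = 1" for p
    using unit_root_pow_eq_1_iff[OF assms] by simp
  then show ?thesis
    using True by simp
next
  case False
  have "(unit_root n ^ a) ^ n = 1"
    using unit_root_pow_eq_1_iff[OF assms, of "a * n"] by (simp add: power_mult)
  moreover have "unit_root n ^ a \<noteq> 1"
    using False unit_root_pow_eq_1_iff[OF assms] by simp
  ultimately have "(\<Sum>p<n. (unit_root n ^ a) ^ p) = 0"
    by (simp add: sum_gp_strict)
  then show ?thesis
    using False by (simp only: power_mult if_False)
qed

section \<open>The discrete Fourier transform of polar n-complex numbers\<close>

definition pc_fourier :: "nat \<Rightarrow> nat \<Rightarrow> (nat \<Rightarrow> real) \<Rightarrow> complex" where
  "pc_fourier n k x = (\<Sum>p<n. of_real (x p) * unit_root n ^ (k * p))"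

lemma pc_proj_point_eq_fourier: "pc_proj_point n k u = pc_fourier n k u"
proof -
  have "unit_root n ^ (k * p) = Complex (cos (2 * pi * real k * real p / real n)) (sin (2 * pi * real k * real p / real n))" for p
    by (simp add: unit_root_pow cis.ctr mult.assoc)
  then show ?thesis
    unfolding pc_proj_point_def pc_v_def pc_vt_def pc_fourier_def by (simp add: complex_eq_iff Re_sum Im_sum)
qed

lemma pc_proj_path_eq_fourier: "pc_proj_path n k gam = (\<lambda>t. pc_fourier n k (\<lambda>j. gam j t))"
  using pc_proj_point_eq_fourier unfolding pc_proj_path_def pc_proj_point_def by presburger

lemma pc_proj_path_at: "pc_proj_path n k gam t = pc_fourier n k (\<lambda>j. gam j t)"
  by (simp add: pc_proj_path_eq_fourier)

lemma pc_fourier_cong: "(\<And>p. p < n \<Longrightarrow> x p = y p) \<Longrightarrow> pc_fourier n k x = pc_fourier n k y"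
  unfolding pc_fourier_def by simp

lemma pc_fourier_diff: "pc_fourier n k (\<lambda>p. x p - y p) = pc_fourier n k x - pc_fourier n k y"
  unfolding pc_fourier_def by (simp add: sum_subtractf left_diff_distrib)

lemma pc_fourier_scale: "pc_fourier n k (\<lambda>p. c * x p) = of_real c * pc_fourier n k x"
  unfolding pc_fourier_def by (simp add: sum_distrib_left mult.assoc)

lemma pc_fourier_sum: "pc_fourier n k (\<lambda>p. \<Sum>i\<in>A. x i p) = (\<Sum>i\<in>A. pc_fourier n k (x i))"
  unfolding pc_fourier_def by (simp add: of_real_sum sum_distrib_right) (rule sum.swap)

lemma pc_fourier_suminf:
  assumes "\<And>p. p < n \<Longrightarrow> summable (\<lambda>i. x i p)"
  shows "pc_fourier n k (\<lambda>p. \<Sum>i. x i p) = (\<Sum>i. pc_fourier n k (x i))"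
proof -
  have "(\<lambda>i. of_real (x i p) * unit_root n ^ (k * p)) sums (of_real (\<Sum>i. x i p) * unit_root n ^ (k * p))"
    if "p < n" for p
    using assms[OF that] by (intro sums_mult2 sums_of_real summable_sums)
  then have "(\<lambda>i. pc_fourier n k (x i)) sums pc_fourier n k (\<lambda>p. \<Sum>i. x i p)"
    unfolding pc_fourier_def by (intro sums_sum) simp
  then show ?thesis
    by (rule sums_unique)
qed

lemma norm_pc_fourier_le: "norm (pc_fourier n k x) \<le> (\<Sum>p<n. \<bar>x p\<bar>)"
proof -
  have "norm (pc_fourier n k x) \<le> (\<Sum>p<n. norm (of_real (x p) * unit_root n ^ (k * p)))"
    unfolding pc_fourier_def by (rule norm_sum)
  then show ?thesis
    by (simp add: norm_mult norm_unit_root_pow)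
qed

lemma add_mod_eq_iff:
  fixes j l m n :: nat
  assumes "j < n" "l < n" "m < n"
  shows "(j + l) mod n = m \<longleftrightarrow> l = (m + n - j) mod n"
proof (cases "j + l < n")
  case True
  then show ?thesis
    using assms by (force simp: mod_if)
next
  case False
  then show ?thesis
    using assms by (smt (verit, del_insts) add.commute add.left_commute add_diff_cancel_left'
        add_diff_inverse_nat mod_add_right_eq mod_add_self1 mod_less order_less_imp_not_less)
qed

lemma pc_mult_eq_convolution:
  assumes "m < n" shows "pc_mult n a b m = (\<Sum>j<n. a j * b ((m + n - j) mod n))"
proof -
  have "(\<Sum>l<n. if (j + l) mod n = m then a j * b l else 0) = a j * b ((m + n - j) mod n)"
    if "j < n" for j
    using that assms by (simp add: add_mod_eq_iff sum.delta cong: if_cong)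
  then show ?thesis
    using assms unfolding pc_mult_def by simp
qed

lemma pc_fourier_mult:
  assumes "n > 0" shows "pc_fourier n k (pc_mult n a b) = pc_fourier n k a * pc_fourier n k b"
proof -
  have root: "unit_root n ^ (k * ((j + l) mod n)) = unit_root n ^ (k * j) * unit_root n ^ (k * l)" for j l
    using unit_root_pow_mod[OF assms]
    by (metis mod_mult_right_eq power_add distrib_left)
  have "pc_fourier n k (pc_mult n a b)
      = (\<Sum>m<n. \<Sum>j<n. \<Sum>l<n. if (j + l) mod n = m then of_real (a j * b l) * unit_root n ^ (k * m) else 0)"
    unfolding pc_fourier_def pc_mult_def
    by (simp add: of_real_sum sum_distrib_right, intro sum.cong refl, simp)
  also have "\<dots> = (\<Sum>j<n. \<Sum>l<n. \<Sum>m<n. if m = (j + l) mod n then of_real (a j * b l) * unit_root n ^ (k * m) else 0)"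
    by (subst sum.swap, subst (2) sum.swap) (simp add: eq_commute)
  also have "\<dots> = (\<Sum>j<n. \<Sum>l<n. of_real (a j * b l) * unit_root n ^ (k * ((j + l) mod n)))"
    using assms by (simp add: sum.delta)
  also have "\<dots> = pc_fourier n k a * pc_fourier n k b"
    unfolding pc_fourier_def root by (simp add: sum_product mult_ac)
  finally show ?thesis .
qed

lemma pc_fourier_one:
  assumes "n > 0" shows "pc_fourier n k (pc_one n) = 1"
proof -
  have "pc_fourier n k (pc_one n) = (\<Sum>p<n. if p = 0 then 1 else 0)"
    unfolding pc_fourier_def pc_one_def by (intro sum.cong) (auto simp: assms)
  then show ?thesis
    using assms by simp
qed

lemma pc_fourier_pow: "n > 0 \<Longrightarrow> pc_fourier n k (pc_pow n x i) = pc_fourier n k x ^ i"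
  by (induction i) (simp_all add: pc_fourier_one pc_fourier_mult)

lemma pc_fourier_inversion:
  assumes "n > 0" "m < n"
  shows "(\<Sum>k<n. pc_fourier n k x * unit_root n ^ (k * (n - m))) = of_nat n * of_real (x m)"
proof -
  have "(\<Sum>k<n. pc_fourier n k x * unit_root n ^ (k * (n - m)))
      = (\<Sum>p<n. of_real (x p) * (\<Sum>k<n. unit_root n ^ ((p + (n - m)) * k)))"
  proof -
    have "unit_root n ^ (k * p) * unit_root n ^ (k * (n - m)) = unit_root n ^ ((p + (n - m)) * k)" for k p
      by (simp add: power_add add_mult_distrib2 mult.commute)
    then show ?thesis
      unfolding pc_fourier_def sum_distrib_right
      by (subst sum.swap) (simp add: mult.assoc sum_distrib_left)
  qed
  also have "\<dots> = (\<Sum>p<n. of_real (x p) * (if p = m then of_nat n else 0))"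
  proof (intro sum.cong refl)
    fix p assume "p \<in> {..<n}"
    then have "n dvd p + (n - m) \<longleftrightarrow> p = m"
      using assms dvd_less_double_iff[of "p + (n - m)" n] by auto
    then show "of_real (x p) * (\<Sum>k<n. unit_root n ^ ((p + (n - m)) * k))
        = of_real (x p) * (if p = m then of_nat n else 0)"
      using sum_unit_root_pow[OF assms(1)] by simp
  qed
  also have "\<dots> = of_nat n * of_real (x m)"
    using assms(2) by (simp add: if_distrib sum.delta cong: if_cong)
  finally show ?thesis .
qed

lemma pc_mult_eq_0_of_ge: "n \<le> m \<Longrightarrow> pc_mult n a b m = 0"
  by (simp add: pc_mult_def)

lemma pc_line_integral_eq_0_of_ge: "n \<le> m \<Longrightarrow> pc_line_integral n F gam m = 0"
  by (simp add: pc_line_integral_def)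

lemma pc_fourier_eqI:
  assumes "n > 0" and "\<And>m. m \<ge> n \<Longrightarrow> x m = 0" and "\<And>m. m \<ge> n \<Longrightarrow> y m = 0"
    and "\<And>k. k < n \<Longrightarrow> pc_fourier n k x = pc_fourier n k y"
  shows "x = y"
proof
  fix m show "x m = y m"
  proof (cases "m < n")
    case True
    then have "of_nat n * complex_of_real (x m) = of_nat n * of_real (y m)"
      using assms(4) by (simp flip: pc_fourier_inversion[OF assms(1)])
    then show ?thesis
      using assms(1) by simp
  qed (use assms in simp)
qed

lemma pc_fourier_reflect:
  assumes "k \<le> n" shows "pc_fourier n (n - k) x = cnj (pc_fourier n k x)"
  unfolding pc_fourier_def using assms by (simp add: unit_root_pow_reflect)

lemma pc_fourier_real:
  assumes "k = 0 \<or> 2 * k = n" shows "pc_fourier n k x \<in> \<real>"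
proof -
  have "Im (unit_root n ^ (k * p)) = 0" for p
  proof (cases "k = 0")
    case False
    then have "2 * pi * real (k * p) / real n = real p * pi"
      using assms by (auto simp: field_simps)
    then show ?thesis
      by (simp add: unit_root_pow)
  qed simp
  then show ?thesis
    unfolding pc_fourier_def complex_is_Real_iff by (simp add: Im_sum)
qed

lemma pc_fourier_et:
  assumes "n > 0" "k < n" "1 \<le> k'" "2 * k' < n"
  shows "pc_fourier n k (pc_et n k') = \<i> * ((if k = k' then 1 else 0) - (if k = n - k' then 1 else 0))"
proof -
  have et: "of_real (pc_et n k' p) = 1 / (of_nat n * \<i>) * (unit_root n ^ (k' * p) - unit_root n ^ ((n - k') * p))"
    if "p < n" for p
  proof -
    define \<theta> where "\<theta> = 2 * pi * real (k' * p) / real n"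
    have root: "unit_root n ^ (k' * p) = cis \<theta>"
      unfolding \<theta>_def by (rule unit_root_pow)
    have "k' \<le> n"
      using assms by simp
    then have "unit_root n ^ (k' * p) - unit_root n ^ ((n - k') * p) = cis \<theta> - cnj (cis \<theta>)"
      by (simp only: unit_root_pow_reflect root)
    also have "\<dots> = 2 * \<i> * of_real (sin \<theta>)"
      by (simp add: complex_eq_iff)
    finally show ?thesis
      using that assms by (simp add: pc_et_def \<theta>_def field_simps)
  qed
  have "pc_fourier n k (pc_et n k')
      = (\<Sum>p<n. 1 / (of_nat n * \<i>) * (unit_root n ^ (k' * p) - unit_root n ^ ((n - k') * p)) * unit_root n ^ (k * p))"
    unfolding pc_fourier_def by (intro sum.cong refl) (simp add: et)
  also have "\<dots> = 1 / (of_nat n * \<i>)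
      * ((\<Sum>p<n. unit_root n ^ ((k' + k) * p)) - (\<Sum>p<n. unit_root n ^ ((n - k' + k) * p)))"
    by (simp add: sum_distrib_left sum_subtractf algebra_simps power_add)
  also have "\<dots> = 1 / (of_nat n * \<i>)
      * ((if n dvd k' + k then of_nat n else 0) - (if n dvd n - k' + k then of_nat n else 0))"
    by (simp only: sum_unit_root_pow[OF assms(1)])
  also have "n dvd k' + k \<longleftrightarrow> k = n - k'"
    using assms dvd_less_double_iff[of "k' + k" n] by auto
  also have "n dvd n - k' + k \<longleftrightarrow> k = k'"
    using assms dvd_less_double_iff[of "n - k' + k" n] by auto
  finally show ?thesis
    using assms by (cases "k = k'"; cases "k = n - k'") (simp_all add: field_simps)
qed

lemma pc_fourier_sum_et:
  assumes "n > 0" "k < n"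
  shows "pc_fourier n k (\<lambda>p. \<Sum>k'\<in>{1..(n - 1) div 2}. pc_et n k' p * a k')
    = \<i> * ((if k \<in> {1..(n - 1) div 2} then a k else 0) - (if n - k \<in> {1..(n - 1) div 2} then a (n - k) else 0))"
proof -
  have "pc_fourier n k (\<lambda>p. \<Sum>k'\<in>{1..(n - 1) div 2}. pc_et n k' p * a k')
      = (\<Sum>k'\<in>{1..(n - 1) div 2}. \<i> * ((if k' = k then of_real (a k') else 0) - (if k' = n - k then of_real (a k') else 0)))"
    unfolding pc_fourier_sum
  proof (intro sum.cong refl)
    fix k' assume "k' \<in> {1..(n - 1) div 2}"
    then have "1 \<le> k'" "2 * k' < n"
      by auto
    then show "pc_fourier n k (\<lambda>p. pc_et n k' p * a k')
        = \<i> * ((if k' = k then of_real (a k') else 0) - (if k' = n - k then of_real (a k') else 0))"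
      using pc_fourier_scale[of n k "a k'" "pc_et n k'"] pc_fourier_et[OF assms] by (auto simp: mult.commute)
  qed
  then show ?thesis
    by (simp only: sum_subtractf sum.delta flip: sum_distrib_left) simp
qed

lemma pc_mult_inverse:
  assumes "pc_invertible n u" shows "pc_mult n u (pc_inverse n u) = pc_one n"
proof -
  obtain w where w: "pc_mult n u w = pc_one n"
    using assms unfolding pc_invertible_def by blast
  define w' where "w' i = (if i < n then w i else 0)" for i
  have "pc_mult n u w' = pc_mult n u w"
    unfolding pc_mult_def w'_def by (intro ext if_cong refl sum.cong) auto
  then have "\<exists>w. pc_mult n u w = pc_one n \<and> (\<forall>i\<ge>n. w i = 0)"
    using w by (auto simp: w'_def)
  then show ?thesis
    unfolding pc_inverse_def by (rule someI2_ex) blast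
qed

lemma pc_fourier_inverse:
  assumes "n > 0" "pc_invertible n u"
  shows "pc_fourier n k u \<noteq> 0" and "pc_fourier n k (pc_inverse n u) = inverse (pc_fourier n k u)"
proof -
  have "pc_fourier n k u * pc_fourier n k (pc_inverse n u) = 1"
    using pc_mult_inverse[OF assms(2)] by (simp flip: pc_fourier_mult[OF assms(1)] add: pc_fourier_one[OF assms(1)])
  then show "pc_fourier n k u \<noteq> 0" and "pc_fourier n k (pc_inverse n u) = inverse (pc_fourier n k u)"
    by (auto dest: inverse_unique)
qed

section \<open>Line integrals as contour integrals of the projected loops\<close>

lemma valid_path_family_C1_off_finite:
  fixes g :: "'i \<Rightarrow> real \<Rightarrow> 'a::real_normed_vector"
  assumes "finite J" and "\<And>j. j \<in> J \<Longrightarrow> valid_path (g j)"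
  obtains T where "finite T" and "\<And>j. j \<in> J \<Longrightarrow> g j C1_differentiable_on {0..1} - T"
proof -
  obtain T where T: "finite (T j)" "g j C1_differentiable_on {0..1} - T j" if "j \<in> J" for j
    using assms(2) unfolding valid_path_def piecewise_C1_differentiable_on_def by metis
  show ?thesis
  proof
    show "finite (\<Union>j\<in>J. T j)"
      using T assms(1) by blast
    show "g j C1_differentiable_on {0..1} - (\<Union>j\<in>J. T j)" if "j \<in> J" for j
      using T[OF that] that by (auto elim!: C1_differentiable_on_subset)
  qed
qed

lemma pc_proj_path_has_vector_derivative:
  assumes "\<And>j. j < n \<Longrightarrow> gam j differentiable at t"
  shows "(pc_proj_path n k gam has_vector_derivative pc_fourier n k (\<lambda>j. vector_derivative (gam j) (at t))) (at t)"
  unfolding pc_proj_path_eq_fourier pc_fourier_def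
proof (rule has_vector_derivative_sum)
  fix p assume "p \<in> {..<n}"
  then have "(gam p has_field_derivative vector_derivative (gam p) (at t)) (at t)"
    using assms vector_derivative_works has_real_derivative_iff_has_vector_derivative by blast
  then show "((\<lambda>t. of_real (gam p t) * unit_root n ^ (k * p)) has_vector_derivative
      of_real (vector_derivative (gam p) (at t)) * unit_root n ^ (k * p)) (at t)"
    by (intro has_vector_derivative_mult_left has_vector_derivative_of_real)
qed

lemma valid_path_pc_proj_path:
  assumes "\<And>j. j < n \<Longrightarrow> valid_path (gam j)"
  shows "valid_path (pc_proj_path n k gam)"
proof -
  obtain T where T: "finite T" "\<And>j. j < n \<Longrightarrow> gam j C1_differentiable_on {0..1} - T"
    using valid_path_family_C1_off_finite[of "{..<n}" gam] assms by auto
  have "continuous_on {0..1} (gam j)" if "j < n" for j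
    using assms[OF that] valid_path_imp_path path_def by blast
  then have "continuous_on {0..1} (pc_proj_path n k gam)"
    unfolding pc_proj_path_eq_fourier pc_fourier_def
    by (intro continuous_intros continuous_on_of_real_o_iff[THEN iffD2, unfolded o_def]) auto
  moreover have "pc_proj_path n k gam C1_differentiable_on {0..1} - T"
    unfolding C1_differentiable_on_def
  proof (intro exI conjI ballI)
    have "continuous_on ({0..1} - T) (\<lambda>t. vector_derivative (gam j) (at t))" if "j < n" for j
      using T(2)[OF that] by (auto simp: C1_differentiable_on_eq)
    then show "continuous_on ({0..1} - T) (\<lambda>t. pc_fourier n k (\<lambda>j. vector_derivative (gam j) (at t)))"
      unfolding pc_fourier_def
      by (intro continuous_intros continuous_on_of_real_o_iff[THEN iffD2, unfolded o_def]) auto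
    fix t assume "t \<in> {0..1} - T"
    with T(2) show "(pc_proj_path n k gam has_vector_derivative pc_fourier n k (\<lambda>j. vector_derivative (gam j) (at t))) (at t)"
      by (intro pc_proj_path_has_vector_derivative) (auto simp: C1_differentiable_on_eq)
  qed
  ultimately show ?thesis
    unfolding valid_path_def piecewise_C1_differentiable_on_def using T(1) by blast
qed

lemma pc_fourier_integral:
  assumes "n > 0" and "\<And>k. k < n \<Longrightarrow> ((\<lambda>t. pc_fourier n k (h t)) has_integral J k) S" and "k < n"
  shows "pc_fourier n k (\<lambda>m. integral S (\<lambda>t. h t m)) = J k"
proof -
  have "((\<lambda>t. h t m) has_integral Re ((\<Sum>k<n. J k * unit_root n ^ (k * (n - m))) / of_nat n)) S"
    if "m < n" for m
  proof -
    have "((\<lambda>t. (\<Sum>k<n. pc_fourier n k (h t) * unit_root n ^ (k * (n - m))) / of_nat n)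
        has_integral (\<Sum>k<n. J k * unit_root n ^ (k * (n - m))) / of_nat n) S"
      by (intro has_integral_divide has_integral_sum has_integral_mult_left assms(2)) auto
    then have "((\<lambda>t. of_real (h t m)) has_integral (\<Sum>k<n. J k * unit_root n ^ (k * (n - m))) / of_nat n) S"
      using assms(1) that by (simp add: pc_fourier_inversion)
    from has_integral_linear[OF this bounded_linear_Re] show ?thesis
      by (simp add: o_def)
  qed
  then have "((\<lambda>t. pc_fourier n k (h t)) has_integral pc_fourier n k (\<lambda>m. integral S (\<lambda>t. h t m))) S"
    unfolding pc_fourier_def
    by (intro has_integral_sum has_integral_mult_left has_integral_of_real) (auto simp: integral_unique)
  then show ?thesis
    using assms(2)[OF assms(3)] by (rule has_integral_unique)
qed

lemma pc_line_integral_eq_integral_mult: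
  "pc_line_integral n F gam m = (if m < n then
     integral {0..1} (\<lambda>t. pc_mult n (F (\<lambda>j. gam j t)) (\<lambda>j. vector_derivative (gam j) (at t)) m) else 0)"
  unfolding pc_line_integral_def by (simp add: pc_mult_eq_convolution)

lemma pc_fourier_line_integral:
  assumes "n > 0" and valid: "\<And>j. j < n \<Longrightarrow> valid_path (gam j)"
    and contour: "\<And>k. k < n \<Longrightarrow> (G k has_contour_integral J k) (pc_proj_path n k gam)"
    and transform: "\<And>k t. k < n \<Longrightarrow> t \<in> {0..1} \<Longrightarrow> pc_fourier n k (F (\<lambda>j. gam j t)) = G k (pc_proj_path n k gam t)"
    and "k < n"
  shows "pc_fourier n k (pc_line_integral n F gam) = J k"
proof -
  obtain T where T: "finite T" "\<And>j. j < n \<Longrightarrow> gam j C1_differentiable_on {0..1} - T"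
    using valid_path_family_C1_off_finite[of "{..<n}" gam] valid by auto
  define h where "h t = pc_mult n (F (\<lambda>j. gam j t)) (\<lambda>j. vector_derivative (gam j) (at t))" for t
  have "((\<lambda>t. pc_fourier n k (h t)) has_integral J k) {0..1}" if "k < n" for k
  proof (rule has_integral_spike_finite)
    show "finite (T \<union> {0, 1})"
      using T(1) by simp
    show "((\<lambda>t. G k (pc_proj_path n k gam t) * vector_derivative (pc_proj_path n k gam) (at t within {0..1}))
        has_integral J k) {0..1}"
      using contour[OF that] unfolding has_contour_integral_def .
    fix t assume t: "t \<in> {0..1} - (T \<union> {0, 1})"
    then have "gam j differentiable at t" if "j < n" for j
      using T(2)[OF that] by (auto simp: C1_differentiable_on_eq)
    then have "vector_derivative (pc_proj_path n k gam) (at t within {0..1})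
        = pc_fourier n k (\<lambda>j. vector_derivative (gam j) (at t))"
      using t at_within_Icc_at[of 0 t 1]
      by (auto intro: vector_derivative_at pc_proj_path_has_vector_derivative)
    then show "pc_fourier n k (h t)
        = G k (pc_proj_path n k gam t) * vector_derivative (pc_proj_path n k gam) (at t within {0..1})"
      unfolding h_def using pc_fourier_mult[OF assms(1)] transform[OF that] t by auto
  qed
  then have "pc_fourier n k (\<lambda>m. integral {0..1} (\<lambda>t. h t m)) = J k"
    using pc_fourier_integral[OF assms(1)] assms(5) by blast
  then show ?thesis
    unfolding h_def by (simp add: pc_line_integral_eq_integral_mult cong: pc_fourier_cong)
qed

lemma pc_fourier_path_diff:
  "pc_fourier n k (\<lambda>j. gam j t - u0 j) = pc_proj_path n k gam t - pc_proj_point n k u0"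
  by (simp add: pc_fourier_diff pc_proj_path_at pc_proj_point_eq_fourier)

lemma pc_proj_path_closed:
  assumes "\<And>j. j < n \<Longrightarrow> gam j 0 = gam j 1"
  shows "pathfinish (pc_proj_path n k gam) = pathstart (pc_proj_path n k gam)"
  unfolding pathfinish_def pathstart_def pc_proj_path_at using assms by (auto intro: pc_fourier_cong)

lemma pc_proj_point_notin_path_image:
  assumes "n > 0" and "\<And>t. t \<in> {0..1} \<Longrightarrow> pc_invertible n (\<lambda>j. gam j t - u0 j)"
  shows "pc_proj_point n k u0 \<notin> path_image (pc_proj_path n k gam)"
proof
  assume "pc_proj_point n k u0 \<in> path_image (pc_proj_path n k gam)"
  then obtain t where "t \<in> {0..1}" "pc_proj_point n k u0 = pc_proj_path n k gam t"
    by (auto simp: path_image_def)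
  then show False
    using pc_fourier_inverse(1)[OF assms(1) assms(2), of t k] by (simp add: pc_fourier_path_diff)
qed

lemma pc_fourier_line_integral_inverse:
  assumes "n > 0" and valid: "\<And>j. j < n \<Longrightarrow> valid_path (gam j)"
    and invertible: "\<And>t. t \<in> {0..1} \<Longrightarrow> pc_invertible n (\<lambda>j. gam j t - u0 j)"
    and "k < n"
  shows "pc_fourier n k (pc_line_integral n (\<lambda>u. pc_inverse n (\<lambda>j. u j - u0 j)) gam)
    = 2 * pi * \<i> * winding_number (pc_proj_path n k gam) (pc_proj_point n k u0)"
proof (rule pc_fourier_line_integral[OF assms(1) valid _ _ assms(4)])
  fix k assume "k < n"
  show "((\<lambda>w. 1 / (w - pc_proj_point n k u0)) has_contour_integral
      2 * pi * \<i> * winding_number (pc_proj_path n k gam) (pc_proj_point n k u0)) (pc_proj_path n k gam)"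
    using valid_path_pc_proj_path[OF valid] pc_proj_point_notin_path_image[OF assms(1) invertible]
    by (rule has_contour_integral_winding_number)
  fix t :: real assume "t \<in> {0..1}"
  then show "pc_fourier n k (pc_inverse n (\<lambda>j. gam j t - u0 j)) = 1 / (pc_proj_path n k gam t - pc_proj_point n k u0)"
    using pc_fourier_inverse(2)[OF assms(1) invertible] by (simp add: pc_fourier_path_diff inverse_eq_divide)
qed

section \<open>Winding numbers and Cauchy's integral formula\<close>

lemma winding_number_zero_real_loop:
  assumes "path p" "pathfinish p = pathstart p" "path_image p \<subseteq> \<real>" "z \<in> \<real>" "z \<notin> path_image p"
  shows "winding_number p z = 0"
proof -
  have conn: "connected (Re ` path_image p)"
    using assms(1) by (intro connected_continuous_image connected_path_image continuous_intros)
  have neq: "Re w \<noteq> Re z" if "w \<in> path_image p" for w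
  proof
    assume "Re w = Re z"
    moreover have "Im w = Im z"
      using that assms(3,4) by (auto simp: complex_is_Real_iff)
    ultimately show False
      using that assms(5) complex_eqI by metis
  qed
  have "path_image p \<subseteq> {w. Re w < Re z} \<or> path_image p \<subseteq> {w. Re w > Re z}"
  proof (rule ccontr)
    assume "\<not> ?thesis"
    then obtain a b where ab: "a \<in> path_image p" "b \<in> path_image p" "\<not> Re a < Re z" "\<not> Re b > Re z"
      by auto
    with neq have "Re b \<le> Re z" "Re z \<le> Re a"
      by (auto simp: not_less)
    with conn ab(1,2) have "Re z \<in> Re ` path_image p"
      unfolding connected_iff_interval by blast
    then show False
      using neq by (metis image_iff)
  qed
  then show ?thesis
    using winding_number_zero_outside[OF assms(1) convex_halfspace_Re_lt assms(2)]
      winding_number_zero_outside[OF assms(1) convex_halfspace_Re_gt assms(2)] by auto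
qed

lemma winding_number_eq_indicator_inside:
  assumes "path \<gamma>" "pathfinish \<gamma> = pathstart \<gamma>" "z \<notin> path_image \<gamma>"
    and "\<And>w. w \<in> inside (path_image \<gamma>) \<Longrightarrow> winding_number \<gamma> w = 1"
  shows "winding_number \<gamma> z = (if z \<in> inside (path_image \<gamma>) then 1 else 0)"
proof (cases "z \<in> inside (path_image \<gamma>)")
  case False
  have "z \<in> inside (path_image \<gamma>) \<union> outside (path_image \<gamma>)"
    unfolding inside_Un_outside using assms(3) by simp
  with False have "z \<in> outside (path_image \<gamma>)"
    by blast
  with False show ?thesis
    using winding_number_zero_in_outside[OF assms(1,2)] by simp
qed (use assms(4) in simp)

lemma has_contour_integral_power_series_div:
  fixes a :: "nat \<Rightarrow> complex"
  assumes "valid_path \<gamma>" "pathfinish \<gamma> = pathstart \<gamma>" "path_image \<gamma> \<subseteq> ball z0 R - {z0}"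
    and "summable (\<lambda>i. a i * of_real R ^ i)"
  shows "((\<lambda>w. (\<Sum>i. a i * (w - z0) ^ i) / (w - z0)) has_contour_integral
           2 * pi * \<i> * winding_number \<gamma> z0 * a 0) \<gamma>"
proof -
  have "R > 0"
    using assms(3) path_image_nonempty[of \<gamma>]
    by (metis Diff_subset ball_eq_empty not_le subset_empty subset_trans)
  have "(\<lambda>w. \<Sum>i. a i * (w - z0) ^ i) holomorphic_on ball z0 R"
    unfolding holomorphic_on_def field_differentiable_def
  proof
    fix z assume "z \<in> ball z0 R"
    then have "norm (z - z0) < norm (of_real R :: complex)"
      using \<open>R > 0\<close> by (simp add: dist_norm norm_minus_commute)
    have "((\<lambda>w. w - z0) has_field_derivative 1) (at z)"
      by (auto intro!: derivative_eq_intros)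
    from DERIV_chain2[OF termdiffs_strong[OF assms(4) \<open>norm (z - z0) < _\<close>] this]
    show "\<exists>f'. ((\<lambda>w. \<Sum>i. a i * (w - z0) ^ i) has_field_derivative f') (at z within ball z0 R)"
      by (blast intro: has_field_derivative_at_within)
  qed
  from Cauchy_integral_formula_convex_simple[OF convex_ball this _ assms(1,3,2)]
  show ?thesis
    using \<open>R > 0\<close> by simp
qed

section \<open>Power series of polar n-complex numbers\<close>

definition pc_power_series :: "nat \<Rightarrow> (nat \<Rightarrow> nat \<Rightarrow> real) \<Rightarrow> (nat \<Rightarrow> real) \<Rightarrow> (nat \<Rightarrow> real) \<Rightarrow> (nat \<Rightarrow> real)" where
  "pc_power_series n c u0 u = (\<lambda>m. \<Sum>i. pc_mult n (c i) (pc_pow n (\<lambda>j. u j - u0 j) i) m)"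

lemma summable_component_of_summable_abs_sum:
  fixes x :: "nat \<Rightarrow> nat \<Rightarrow> real"
  assumes "summable (\<lambda>i. \<Sum>m<n. \<bar>x i m\<bar>)" and "m < n"
  shows "summable (\<lambda>i. x i m)"
proof (rule summable_comparison_test'[OF assms(1)])
  fix i
  show "norm (x i m) \<le> (\<Sum>m<n. \<bar>x i m\<bar>)"
    using member_le_sum[of m "{..<n}" "\<lambda>m. \<bar>x i m\<bar>"] assms(2) by simp
qed

lemma pc_fourier_power_series:
  assumes "n > 0" and "\<And>m. m < n \<Longrightarrow> summable (\<lambda>i. pc_mult n (c i) (pc_pow n (\<lambda>j. u j - u0 j) i) m)"
  shows "pc_fourier n k (pc_power_series n c u0 u)
    = (\<Sum>i. pc_fourier n k (c i) * (pc_fourier n k u - pc_fourier n k u0) ^ i)"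
  unfolding pc_power_series_def using assms
  by (simp add: pc_fourier_suminf pc_fourier_mult pc_fourier_pow pc_fourier_diff)

lemma pc_mult_zero_right: "pc_mult n a (\<lambda>m. 0) = (\<lambda>m. 0)"
  unfolding pc_mult_def by (intro ext) (auto intro!: sum.neutral)

lemma pc_fourier_power_series_center:
  assumes "n > 0"
  shows "pc_fourier n k (pc_power_series n c u0 u0) = pc_fourier n k (c 0)"
proof -
  have "pc_mult n (c (Suc i)) (pc_pow n (\<lambda>j. u0 j - u0 j) (Suc i)) m = 0" for i m
    by (simp add: pc_mult_zero_right)
  then have "summable (\<lambda>i. pc_mult n (c i) (pc_pow n (\<lambda>j. u0 j - u0 j) i) m)" for m
    by (subst summable_Suc_iff[symmetric]) simp
  then show ?thesis
    using assms by (simp add: pc_fourier_power_series powser_zero)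
qed

lemma norm_pc_fourier_power_le:
  assumes "n > 0"
  shows "norm (pc_fourier n k a) * norm (pc_fourier n k x) ^ i \<le> (\<Sum>m<n. \<bar>pc_mult n a (pc_pow n x i) m\<bar>)"
  using norm_pc_fourier_le[of n k "pc_mult n a (pc_pow n x i)"]
  by (simp add: pc_fourier_mult[OF assms] pc_fourier_pow[OF assms] norm_mult norm_power)

lemma pc_open_stretch:
  assumes "pc_open n S" and "u \<in> S"
  obtains \<epsilon> where "\<epsilon> > 0" and "(\<lambda>m. u0 m + (1 + \<epsilon>) * (u m - u0 m)) \<in> S"
proof -
  obtain e where "e > 0" and e: "\<And>w. (\<forall>m<n. \<bar>w m - u m\<bar> < e) \<Longrightarrow> w \<in> S"
    using assms unfolding pc_open_def by blast
  define B where "B = (\<Sum>m<n. \<bar>u m - u0 m\<bar>)"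
  define \<epsilon> where "\<epsilon> = e / (B + 1)"
  have "B \<ge> 0"
    unfolding B_def by (simp add: sum_nonneg)
  then have "\<epsilon> > 0" "\<epsilon> * B < e"
    using \<open>e > 0\<close> by (simp_all add: \<epsilon>_def field_simps)
  have "\<bar>(u0 m + (1 + \<epsilon>) * (u m - u0 m)) - u m\<bar> < e" if "m < n" for m
  proof -
    have "\<bar>u m - u0 m\<bar> \<le> B"
      unfolding B_def using that by (intro member_le_sum) auto
    then have "\<epsilon> * \<bar>u m - u0 m\<bar> \<le> \<epsilon> * B"
      using \<open>\<epsilon> > 0\<close> by (intro mult_left_mono) auto
    moreover have "(u0 m + (1 + \<epsilon>) * (u m - u0 m)) - u m = \<epsilon> * (u m - u0 m)"
      by (simp add: algebra_simps)
    then have "\<bar>(u0 m + (1 + \<epsilon>) * (u m - u0 m)) - u m\<bar> = \<epsilon> * \<bar>u m - u0 m\<bar>"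
      using \<open>\<epsilon> > 0\<close> by (simp add: abs_mult)
    ultimately show ?thesis
      using \<open>\<epsilon> * B < e\<close> by linarith
  qed
  then show ?thesis
    by (intro that[OF \<open>\<epsilon> > 0\<close>] e) simp
qed

(* S is only known to be a neighbourhood of the loop.  Pushing the point of the loop farthest
   from u0 a little further out stays in S, and convergence there bounds the transformed
   coefficients on a disc that strictly contains the projected loop. *)
lemma pc_power_series_fourier_disc:
  assumes "n > 0" and "pc_open n S" and path_in_S: "\<And>t. t \<in> {0..1} \<Longrightarrow> (\<lambda>j. gam j t) \<in> S"
    and summable: "\<And>u. u \<in> S \<Longrightarrow> summable (\<lambda>i. \<Sum>m<n. \<bar>pc_mult n (c i) (pc_pow n (\<lambda>j. u j - u0 j) i) m\<bar>)"
    and "path (pc_proj_path n k gam)" and avoid: "pc_proj_point n k u0 \<notin> path_image (pc_proj_path n k gam)"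
  obtains R where "path_image (pc_proj_path n k gam) \<subseteq> ball (pc_proj_point n k u0) R"
    and "summable (\<lambda>i. pc_fourier n k (c i) * of_real R ^ i)"
proof -
  define P where "P = pc_proj_path n k gam"
  define z0 where "z0 = pc_proj_point n k u0"
  have cont: "continuous_on {0..1} (\<lambda>t. norm (P t - z0))"
    using assms(5) unfolding P_def path_def by (intro continuous_intros)
  obtain s where s: "s \<in> {0..1}" and farthest: "\<forall>t\<in>{0..1}. norm (P t - z0) \<le> norm (P s - z0)"
    using continuous_attains_sup[OF compact_Icc _ cont] by auto
  define M where "M = norm (P s - z0)"
  have "M > 0"
    using avoid s unfolding M_def P_def z0_def path_image_def by (metis image_eqI zero_less_norm_iff right_minus_eq)
  obtain \<epsilon> where "\<epsilon> > 0" and stretched_in_S: "(\<lambda>m. u0 m + (1 + \<epsilon>) * (gam m s - u0 m)) \<in> S"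
    using pc_open_stretch[OF assms(2) path_in_S[OF s]] by blast
  define x where "x j = (1 + \<epsilon>) * (gam j s - u0 j)" for j
  have "(\<lambda>j. u0 j + (1 + \<epsilon>) * (gam j s - u0 j) - u0 j) = x"
    unfolding x_def by auto
  with summable[OF stretched_in_S] have summable_x: "summable (\<lambda>i. \<Sum>m<n. \<bar>pc_mult n (c i) (pc_pow n x i) m\<bar>)"
    by (simp only:)
  define R where "R = (1 + \<epsilon>) * M"
  have "M < R"
    using \<open>M > 0\<close> \<open>\<epsilon> > 0\<close> by (simp add: R_def algebra_simps)
  have "norm (complex_of_real (1 + \<epsilon>)) = 1 + \<epsilon>"
    using \<open>\<epsilon> > 0\<close> by (simp only: norm_of_real)
  then have norm_x: "norm (pc_fourier n k x) = R"
    unfolding x_def by (simp add: pc_fourier_scale pc_fourier_path_diff norm_mult R_def M_def P_def z0_def)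
  have "summable (\<lambda>i. norm (pc_fourier n k (c i)) * R ^ i)"
  proof (rule summable_comparison_test'[OF summable_x])
    fix i
    show "norm (norm (pc_fourier n k (c i)) * R ^ i) \<le> (\<Sum>m<n. \<bar>pc_mult n (c i) (pc_pow n x i) m\<bar>)"
      using norm_pc_fourier_power_le[OF assms(1), of k "c i" x i] \<open>M < R\<close> \<open>M > 0\<close> by (simp add: norm_x)
  qed
  moreover have "norm (pc_fourier n k (c i) * of_real R ^ i) = norm (pc_fourier n k (c i)) * R ^ i" for i
    using \<open>M < R\<close> \<open>M > 0\<close> by (simp only: norm_mult norm_power norm_of_real abs_of_pos)
  ultimately have "summable (\<lambda>i. norm (pc_fourier n k (c i) * of_real R ^ i))"
    by (simp only:)
  then have "summable (\<lambda>i. pc_fourier n k (c i) * of_real R ^ i)"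
    by (rule summable_norm_cancel)
  moreover have "path_image P \<subseteq> ball z0 R"
  proof
    fix x assume "x \<in> path_image P"
    then obtain t where "t \<in> {0..1}" "x = P t"
      by (auto simp: path_image_def)
    then have "norm (x - z0) \<le> M"
      using farthest unfolding M_def by blast
    then show "x \<in> ball z0 R"
      using \<open>M < R\<close> by (simp add: dist_norm norm_minus_commute)
  qed
  ultimately show ?thesis
    using that unfolding P_def z0_def by blast
qed

lemma pc_fourier_line_integral_power_series_div:
  assumes "n > 0" and valid: "\<And>j. j < n \<Longrightarrow> valid_path (gam j)"
    and invertible: "\<And>t. t \<in> {0..1} \<Longrightarrow> pc_invertible n (\<lambda>j. gam j t - u0 j)"
    and "pc_open n S" and path_in_S: "\<And>t. t \<in> {0..1} \<Longrightarrow> (\<lambda>j. gam j t) \<in> S"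
    and summable: "\<And>u. u \<in> S \<Longrightarrow> summable (\<lambda>i. \<Sum>m<n. \<bar>pc_mult n (c i) (pc_pow n (\<lambda>j. u j - u0 j) i) m\<bar>)"
    and closed: "\<And>j. j < n \<Longrightarrow> gam j 0 = gam j 1" and "k < n"
  shows "pc_fourier n k (pc_line_integral n (\<lambda>u. pc_mult n (pc_power_series n c u0 u) (pc_inverse n (\<lambda>j. u j - u0 j))) gam)
    = pc_fourier n k (pc_power_series n c u0 u0) * (2 * pi * \<i> * winding_number (pc_proj_path n k gam) (pc_proj_point n k u0))"
proof (rule pc_fourier_line_integral[OF assms(1) valid _ _ assms(8),
      where G = "\<lambda>k w. (\<Sum>i. pc_fourier n k (c i) * (w - pc_proj_point n k u0) ^ i) / (w - pc_proj_point n k u0)"])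
  fix k assume "k < n"
  have valid_k: "valid_path (pc_proj_path n k gam)"
    by (rule valid_path_pc_proj_path[OF valid])
  have avoid: "pc_proj_point n k u0 \<notin> path_image (pc_proj_path n k gam)"
    by (rule pc_proj_point_notin_path_image[OF assms(1) invertible])
  obtain R where "path_image (pc_proj_path n k gam) \<subseteq> ball (pc_proj_point n k u0) R"
    and "summable (\<lambda>i. pc_fourier n k (c i) * of_real R ^ i)"
    using pc_power_series_fourier_disc[OF assms(1,4) path_in_S summable valid_path_imp_path[OF valid_k] avoid]
    by blast
  with avoid have "((\<lambda>w. (\<Sum>i. pc_fourier n k (c i) * (w - pc_proj_point n k u0) ^ i) / (w - pc_proj_point n k u0))
      has_contour_integral 2 * pi * \<i> * winding_number (pc_proj_path n k gam) (pc_proj_point n k u0) * pc_fourier n k (c 0))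
      (pc_proj_path n k gam)"
    by (intro has_contour_integral_power_series_div valid_k pc_proj_path_closed closed) auto
  then show "((\<lambda>w. (\<Sum>i. pc_fourier n k (c i) * (w - pc_proj_point n k u0) ^ i) / (w - pc_proj_point n k u0))
      has_contour_integral pc_fourier n k (pc_power_series n c u0 u0)
        * (2 * pi * \<i> * winding_number (pc_proj_path n k gam) (pc_proj_point n k u0))) (pc_proj_path n k gam)"
    by (simp add: pc_fourier_power_series_center[OF assms(1)] mult_ac)
  fix t :: real assume "t \<in> {0..1}"
  then have "pc_fourier n k (pc_power_series n c u0 (\<lambda>j. gam j t))
      = (\<Sum>i. pc_fourier n k (c i) * (pc_proj_path n k gam t - pc_proj_point n k u0) ^ i)"
    using summable_component_of_summable_abs_sum[OF summable[OF path_in_S]]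
    by (simp add: pc_fourier_power_series[OF assms(1)] pc_proj_path_at pc_proj_point_eq_fourier)
  with \<open>t \<in> {0..1}\<close> show "pc_fourier n k (pc_mult n (pc_power_series n c u0 (\<lambda>j. gam j t)) (pc_inverse n (\<lambda>j. gam j t - u0 j)))
      = (\<Sum>i. pc_fourier n k (c i) * (pc_proj_path n k gam t - pc_proj_point n k u0) ^ i)
        / (pc_proj_path n k gam t - pc_proj_point n k u0)"
    using pc_fourier_inverse(2)[OF assms(1) invertible]
    by (simp add: pc_fourier_mult[OF assms(1)] pc_fourier_path_diff divide_inverse)
qed

lemma pc_line_integral_power_series_div:
  assumes "n > 0" and valid: "\<And>j. j < n \<Longrightarrow> valid_path (gam j)"
    and invertible: "\<And>t. t \<in> {0..1} \<Longrightarrow> pc_invertible n (\<lambda>j. gam j t - u0 j)"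
    and "pc_open n S" and "\<And>t. t \<in> {0..1} \<Longrightarrow> (\<lambda>j. gam j t) \<in> S"
    and "\<And>u. u \<in> S \<Longrightarrow> summable (\<lambda>i. \<Sum>m<n. \<bar>pc_mult n (c i) (pc_pow n (\<lambda>j. u j - u0 j) i) m\<bar>)"
    and "\<And>j. j < n \<Longrightarrow> gam j 0 = gam j 1"
  shows "pc_line_integral n (\<lambda>u. pc_mult n (pc_power_series n c u0 u) (pc_inverse n (\<lambda>j. u j - u0 j))) gam
    = pc_mult n (pc_power_series n c u0 u0) (pc_line_integral n (\<lambda>u. pc_inverse n (\<lambda>j. u j - u0 j)) gam)"
proof (rule pc_fourier_eqI[OF assms(1)])
  fix k assume "k < n"
  have "pc_fourier n k (pc_line_integral n (\<lambda>u. pc_mult n (pc_power_series n c u0 u) (pc_inverse n (\<lambda>j. u j - u0 j))) gam)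
      = pc_fourier n k (pc_power_series n c u0 u0) * (2 * pi * \<i> * winding_number (pc_proj_path n k gam) (pc_proj_point n k u0))"
    by (rule pc_fourier_line_integral_power_series_div[OF assms \<open>k < n\<close>])
  also have "\<dots> = pc_fourier n k (pc_power_series n c u0 u0) * pc_fourier n k (pc_line_integral n (\<lambda>u. pc_inverse n (\<lambda>j. u j - u0 j)) gam)"
    by (simp only: pc_fourier_line_integral_inverse[OF assms(1) valid invertible \<open>k < n\<close>])
  finally show "pc_fourier n k (pc_line_integral n (\<lambda>u. pc_mult n (pc_power_series n c u0 u) (pc_inverse n (\<lambda>j. u j - u0 j))) gam)
      = pc_fourier n k (pc_mult n (pc_power_series n c u0 u0) (pc_line_integral n (\<lambda>u. pc_inverse n (\<lambda>j. u j - u0 j)) gam))"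
    by (simp only: pc_fourier_mult[OF assms(1)])
qed (fact pc_line_integral_eq_0_of_ge pc_mult_eq_0_of_ge)+

section \<open>Integrating the inverse\<close>

lemma winding_number_pc_proj_path_real:
  assumes "path (pc_proj_path n k gam)" "pathfinish (pc_proj_path n k gam) = pathstart (pc_proj_path n k gam)"
    and "pc_proj_point n k u0 \<notin> path_image (pc_proj_path n k gam)" and "k = 0 \<or> 2 * k = n"
  shows "winding_number (pc_proj_path n k gam) (pc_proj_point n k u0) = 0"
proof (rule winding_number_zero_real_loop[OF assms(1,2) _ _ assms(3)])
  show "path_image (pc_proj_path n k gam) \<subseteq> \<real>" "pc_proj_point n k u0 \<in> \<real>"
    using pc_fourier_real[OF assms(4)] by (auto simp: path_image_def pc_proj_path_at pc_proj_point_eq_fourier)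
qed

lemma mem_half_range_iff: "(k::nat) \<in> {1..(n - 1) div 2} \<longleftrightarrow> 1 \<le> k \<and> 2 * k < n"
  unfolding atLeastAtMost_iff by presburger

lemma pc_line_integral_inverse:
  assumes "n > 0" and valid: "\<And>j. j < n \<Longrightarrow> valid_path (gam j)"
    and closed: "\<And>j. j < n \<Longrightarrow> gam j 0 = gam j 1"
    and invertible: "\<And>t. t \<in> {0..1} \<Longrightarrow> pc_invertible n (\<lambda>j. gam j t - u0 j)"
    and ccw: "\<And>k z. k \<in> {1..(n - 1) div 2} \<Longrightarrow> z \<in> inside (path_image (pc_proj_path n k gam))
                \<Longrightarrow> winding_number (pc_proj_path n k gam) z = 1"
  shows "pc_line_integral n (\<lambda>u. pc_inverse n (\<lambda>j. u j - u0 j)) gam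
    = (\<lambda>p. 2 * pi * (\<Sum>k\<in>{1..(n - 1) div 2}.
         pc_et n k p * (if pc_proj_point n k u0 \<in> inside (path_image (pc_proj_path n k gam)) then 1 else 0)))"
    (is "?I = (\<lambda>p. 2 * pi * (\<Sum>k\<in>?K. pc_et n k p * ?ind k))")
proof (rule pc_fourier_eqI[OF assms(1)])
  have path: "path (pc_proj_path n k gam)" for k
    by (rule valid_path_imp_path[OF valid_path_pc_proj_path[OF valid]])
  have loop: "pathfinish (pc_proj_path n k gam) = pathstart (pc_proj_path n k gam)" for k
    using closed by (rule pc_proj_path_closed)
  have avoid: "pc_proj_point n k u0 \<notin> path_image (pc_proj_path n k gam)" for k
    using assms(1) invertible by (rule pc_proj_point_notin_path_image)
  have winding: "winding_number (pc_proj_path n k gam) (pc_proj_point n k u0) = ?ind k"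
    if "k \<in> ?K" for k
    using winding_number_eq_indicator_inside[OF path loop avoid ccw[OF that]] by simp
  fix k assume "k < n"
  have I: "pc_fourier n k' ?I = 2 * pi * \<i> * winding_number (pc_proj_path n k' gam) (pc_proj_point n k' u0)"
    if "k' < n" for k'
    using pc_fourier_line_integral_inverse[OF assms(1) valid invertible that] .
  have R: "pc_fourier n k (\<lambda>p. 2 * pi * (\<Sum>k\<in>?K. pc_et n k p * ?ind k))
      = of_real (2 * pi) * (\<i> * ((if k \<in> ?K then ?ind k else 0) - (if n - k \<in> ?K then ?ind (n - k) else 0)))"
    by (simp only: pc_fourier_scale pc_fourier_sum_et[OF assms(1) \<open>k < n\<close>])
  consider "1 \<le> k" "2 * k < n" | "n < 2 * k" | "k = 0 \<or> 2 * k = n"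
    by linarith
  then show "pc_fourier n k ?I = pc_fourier n k (\<lambda>p. 2 * pi * (\<Sum>k\<in>?K. pc_et n k p * ?ind k))"
  proof cases
    case 1
    then have "k \<in> ?K" "n - k \<notin> ?K"
      unfolding mem_half_range_iff by auto
    then show ?thesis
      unfolding R I[OF \<open>k < n\<close>] winding[OF \<open>k \<in> ?K\<close>] if_P[OF \<open>k \<in> ?K\<close>]
        if_not_P[OF \<open>n - k \<notin> ?K\<close>] by simp
  next
    case 2
    then have "n - k \<in> ?K" "k \<notin> ?K" "n - k < n"
      unfolding mem_half_range_iff using \<open>k < n\<close> by auto
    have "pc_fourier n (n - (n - k)) ?I = cnj (pc_fourier n (n - k) ?I)"
      by (rule pc_fourier_reflect) simp
    then have "pc_fourier n k ?I = cnj (pc_fourier n (n - k) ?I)"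
      using \<open>k < n\<close> by simp
    also have "\<dots> = cnj (2 * pi * \<i> * ?ind (n - k))"
      by (simp only: I[OF \<open>n - k < n\<close>] winding[OF \<open>n - k \<in> ?K\<close>])
    finally show ?thesis
      unfolding R if_P[OF \<open>n - k \<in> ?K\<close>] if_not_P[OF \<open>k \<notin> ?K\<close>] by simp
  next
    case 3
    have "winding_number (pc_proj_path n k gam) (pc_proj_point n k u0) = 0"
      using path loop avoid 3 by (rule winding_number_pc_proj_path_real)
    moreover have "k \<notin> ?K" "n - k \<notin> ?K"
      unfolding mem_half_range_iff using 3 \<open>k < n\<close> by auto
    ultimately show ?thesis
      unfolding R I[OF \<open>k < n\<close>] if_not_P[OF \<open>k \<notin> ?K\<close>] if_not_P[OF \<open>n - k \<notin> ?K\<close>] by simp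
  qed
qed (fact pc_line_integral_eq_0_of_ge, simp add: pc_et_def)

theorem mainTheorem17:
  fixes n :: nat and u0 :: "nat \<Rightarrow> real" and gam :: "nat \<Rightarrow> real \<Rightarrow> real"
  assumes n2: "n \<ge> 2"
    and piecewise_smooth: "\<forall>j<n. valid_path (gam j)"
    and closed: "\<forall>j<n. gam j 0 = gam j 1"
    and invertible: "\<forall>t\<in>{0..1}. pc_invertible n (\<lambda>j. gam j t - u0 j)"
    and simple: "\<forall>k\<in>{1..(n - 1) div 2}. simple_path (pc_proj_path n k gam)"
    and ccw: "\<forall>k\<in>{1..(n - 1) div 2}. \<forall>z\<in>inside (path_image (pc_proj_path n k gam)).
                 winding_number (pc_proj_path n k gam) z = 1"
    and avoid: "\<forall>k\<in>{1..(n - 1) div 2}. pc_proj_point n k u0 \<notin> path_image (pc_proj_path n k gam)"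
  shows
   "pc_line_integral n (\<lambda>u. pc_inverse n (\<lambda>j. u j - u0 j)) gam
      = (\<lambda>p. 2 * pi * (\<Sum>k\<in>{1..(n - 1) div 2}.
            pc_et n k p * (if pc_proj_point n k u0 \<in> inside (path_image (pc_proj_path n k gam)) then 1 else 0)))
    \<and>
    (\<forall>(c :: nat \<Rightarrow> nat \<Rightarrow> real) (S :: (nat \<Rightarrow> real) set) (\<sigma> :: nat \<Rightarrow> complex \<Rightarrow> real).
       pc_open n S
       \<and> (\<forall>t\<in>{0..1}. (\<lambda>j. gam j t) \<in> S)
       \<and> (\<forall>m<n. continuous_on (cball 0 1) (\<sigma> m))
       \<and> (\<forall>m<n. \<forall>t\<in>{0..1}. \<sigma> m (cis (2 * pi * t)) = gam m t)
       \<and> (\<forall>z\<in>cball 0 1. (\<lambda>m. \<sigma> m z) \<in> S)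
       \<and> (\<forall>u\<in>S. summable (\<lambda>i. \<Sum>m<n. \<bar>pc_mult n (c i) (pc_pow n (\<lambda>j. u j - u0 j) i) m\<bar>))
     \<longrightarrow>
       (let f = (\<lambda>u m. \<Sum>i. pc_mult n (c i) (pc_pow n (\<lambda>j. u j - u0 j) i) m) in
        pc_line_integral n (\<lambda>u. pc_mult n (f u) (pc_inverse n (\<lambda>j. u j - u0 j))) gam
        = pc_mult n (f u0) (\<lambda>p. 2 * pi * (\<Sum>k\<in>{1..(n - 1) div 2}.
            pc_et n k p * (if pc_proj_point n k u0 \<in> inside (path_image (pc_proj_path n k gam)) then 1 else 0)))))"
proof -
  have "n > 0"
    using n2 by simp
  have inverse: "pc_line_integral n (\<lambda>u. pc_inverse n (\<lambda>j. u j - u0 j)) gam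
      = (\<lambda>p. 2 * pi * (\<Sum>k\<in>{1..(n - 1) div 2}.
          pc_et n k p * (if pc_proj_point n k u0 \<in> inside (path_image (pc_proj_path n k gam)) then 1 else 0)))"
    using piecewise_smooth closed invertible ccw by (intro pc_line_integral_inverse \<open>n > 0\<close>) auto
  have power_series: "(\<lambda>u m. \<Sum>i. pc_mult n (c i) (pc_pow n (\<lambda>j. u j - u0 j) i) m) = pc_power_series n c u0" for c
    by (intro ext) (simp add: pc_power_series_def)
  show ?thesis
    unfolding power_series Let_def inverse[symmetric]
    by (intro conjI allI impI refl, elim conjE, rule pc_line_integral_power_series_div[OF \<open>n > 0\<close>])
      (use piecewise_smooth closed invertible in auto)
qed

end
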